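(* Let $m\ge 1$ and let $\mathbf a=(a_1,\dots,a_m)$ be an admissible sequence. For a nonnegative integer $x$ define the $m\times m$ matrices $$\mathbf m(\mathbf a,x)=\left(\frac{(q^{2i+2x};q^2)_{a_j+1-2i}}{(q;q)_{a_j+1-2i}}\right)_{i,j=1}^m,\qquad \mathbf s(\mathbf a)=\left(\frac{1}{(q;q)_{a_j+1-2i}}\right)_{i,j=1}^m,$$ where in both matrices the $(i,j)$-entry is defined to be $0$ whenever $a_j+1-2i<0$. Then, as an identity of rational functions in $q$, $$\det \mathbf m(\mathbf a,x)=\left(\prod_{k=1}^m (q^{2x+2k};q)_{a_k-2k+1}\right)\det \mathbf s(\mathbf a).$$
   Context: $q$ is an indeterminate. For integers $n\ge 0$, $(a;q)_n=\prod_{j=0}^{n-1}(1-aq^j)$ (so $(a;q)_0=1$). A finite sequence of integers $\mathbf a=(a_1,\dots,a_m)$ is called admissible if it is strictly increasing and $2i-1\le a_i\le 2m$ for all $1\le i\le m$. *)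

theory Defs
  imports "Jordan_Normal_Form.Determinant" "HOL-Computational_Algebra.Polynomial"
          "HOL-Computational_Algebra.Fraction_Field"
begin

definition qpoch :: "'a::comm_ring_1 \<Rightarrow> 'a \<Rightarrow> nat \<Rightarrow> 'a" where
  "qpoch a q n = (\<Prod>j<n. 1 - a * q ^ j)"

definition qvar :: "rat poly fract" where
  "qvar = Fract [:0, 1:] 1"

text \<open>Admissible sequences (1-indexed in the paper; list index i-1 here).\<close>
definition admissible :: "int list \<Rightarrow> bool" where
  "admissible a \<longleftrightarrow> sorted_wrt (<) a \<and>
     (\<forall>i\<in>{1..length a}. 2 * int i - 1 \<le> a ! (i - 1) \<and> a ! (i - 1) \<le> 2 * int (length a))"

text \<open>Matrix m(a,x); entry (i,j) with 0-based indices corresponds to paper's (i+1,j+1).\<close>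
definition mmat :: "int list \<Rightarrow> nat \<Rightarrow> rat poly fract mat" where
  "mmat a x = mat (length a) (length a) (\<lambda>(i, j).
     (let e = a ! j + 1 - 2 * int (i + 1) in
      if e < 0 then 0
      else qpoch (qvar ^ (2 * (i + 1) + 2 * x)) (qvar ^ 2) (nat e) / qpoch qvar qvar (nat e)))"

definition smat :: "int list \<Rightarrow> rat poly fract mat" where
  "smat a = mat (length a) (length a) (\<lambda>(i, j).
     (let e = a ! j + 1 - 2 * int (i + 1) in
      if e < 0 then 0 else 1 / qpoch qvar qvar (nat e)))"

end

theory Submission
  imports Defs
begin

text \<open>Multiply \<open>m(a, x)\<close> from the left by the upper unitriangular matrix with \<open>(i, i + d)\<close> entry
  \<open>(-1)\<^sup>d Y\<^sup>d q\<^bsup>d\<^sup>2\<^esup> (Y; q\<^sup>2)\<^sub>d / (q\<^sup>2; q\<^sup>2)\<^sub>d\<close>, where \<open>Y = q\<^bsup>2i+2x\<^esup>\<close>. Writing \<open>N = a\<^sub>j + 1 - 2i\<close>, the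
  \<open>(i, j)\<close> entry of the product is a terminating sum which collapses by the identity
  \<open>\<Sum>\<^sub>d (-1)\<^sup>d Y\<^sup>d q\<^bsup>d\<^sup>2\<^esup> (Y; q\<^sup>2)\<^bsub>N-d\<^esub> / ((q\<^sup>2; q\<^sup>2)\<^sub>d (q; q)\<^bsub>N-2d\<^esub>) = (Y; q)\<^sub>N / (q; q)\<^sub>N\<close>,
  proved by induction on \<open>N\<close> with a telescoping certificate. The product is therefore \<open>s(a)\<close> with
  row \<open>i\<close> divided by \<open>(q\<^bsup>2x+1\<^esup>; q)\<^bsub>2i-1\<^esub>\<close> and column \<open>j\<close> multiplied by \<open>(q\<^bsup>2x+1\<^esup>; q)\<^bsub>a\<^sub>j\<^esub>\<close>, and
  these factors combine to the product in the theorem.\<close>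

lemma qpoch_0 [simp]: "qpoch a q 0 = 1"
  unfolding qpoch_def by simp

lemma qpoch_Suc: "qpoch a q (Suc n) = qpoch a q n * (1 - a * q ^ n)"
  unfolding qpoch_def by (simp add: mult.commute)

lemma qpoch_add: "qpoch a q (m + n) = qpoch a q m * qpoch (a * q ^ m) q n"
  by (induction n) (simp_all add: qpoch_Suc power_add mult.assoc)

lemma qpoch_shift_eq_div:
  fixes a q :: "'a::field"
  assumes "qpoch a q m \<noteq> 0"
  shows "qpoch (a * q ^ m) q k = qpoch a q (m + k) / qpoch a q m"
  using assms by (simp add: qpoch_add)

lemma qpoch_power_nonzero:
  fixes q :: "'a::idom"
  assumes "\<forall>j>0. q ^ j \<noteq> 1" and "0 < c"
  shows "qpoch (q ^ c) q n \<noteq> 0"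
  using assms unfolding qpoch_def by (simp add: power_add[symmetric])

lemma not_root_of_unity_power:
  fixes q :: "'a::idom"
  assumes "\<forall>j>0. q ^ j \<noteq> 1" and "0 < c"
  shows "\<forall>j>0. (q ^ c) ^ j \<noteq> 1"
  using assms by (simp add: power_mult[symmetric])

text \<open>Extending \<open>1 / (q; q)\<^sub>n\<close> by zero to negative \<open>n\<close> makes the recurrence \<open>inv_qfact_pred\<close>
  hold for every integer, so the summands below need no case distinction on their range.\<close>

definition inv_qfact :: "'a::field \<Rightarrow> int \<Rightarrow> 'a" where
  "inv_qfact q n = (if n < 0 then 0 else inverse (qpoch q q (nat n)))"

lemma inv_qfact_pred:
  fixes q :: "'a::field"
  assumes "\<forall>j>0. q ^ j \<noteq> 1"
  shows "inv_qfact q (n - 1) = inv_qfact q n * (1 - q ^ nat n)"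
proof (cases "n > 0")
  case True
  then have "nat n = Suc (nat (n - 1))" by simp
  moreover have "1 - q ^ nat n \<noteq> 0" using assms True by simp
  ultimately show ?thesis
    using True unfolding inv_qfact_def by (simp add: qpoch_Suc)
next
  case False
  then show ?thesis unfolding inv_qfact_def by auto
qed

definition qsum_term :: "'a::field \<Rightarrow> 'a \<Rightarrow> nat \<Rightarrow> nat \<Rightarrow> 'a" where
  "qsum_term q Y N d = (-1) ^ d * Y ^ d * q ^ (d * d) * qpoch Y (q\<^sup>2) (N - d)
     * inv_qfact (q\<^sup>2) (int d) * inv_qfact q (int N - 2 * int d)"

lemma qsum_term_eq_0: "N < 2 * d \<Longrightarrow> qsum_term q Y N d = 0"
  unfolding qsum_term_def inv_qfact_def by simp

definition qsum_coeff :: "'a::field \<Rightarrow> 'a \<Rightarrow> nat \<Rightarrow> 'a" where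
  "qsum_coeff q Y d = (-1) ^ d * Y ^ d * q ^ (d * d) * qpoch Y (q\<^sup>2) d / qpoch (q\<^sup>2) (q\<^sup>2) d"

lemma qsum_term_eq_coeff_mult:
  assumes "2 * d \<le> N"
  shows "qsum_term q Y N d
    = qsum_coeff q Y d * (qpoch (Y * (q\<^sup>2) ^ d) (q\<^sup>2) (N - 2 * d) / qpoch q q (N - 2 * d))"
proof -
  have "qpoch Y (q\<^sup>2) (N - d) = qpoch Y (q\<^sup>2) d * qpoch (Y * (q\<^sup>2) ^ d) (q\<^sup>2) (N - 2 * d)"
    using qpoch_add[of Y "q\<^sup>2" d "N - 2 * d"] assms by (simp add: add_diff_inverse_nat)
  moreover have "int N - 2 * int d = int (N - 2 * d)" using assms by simp
  ultimately show ?thesis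
    unfolding qsum_term_def qsum_coeff_def inv_qfact_def
    by (simp add: field_simps del: of_nat_diff)
qed

definition qsum_cert :: "'a::field \<Rightarrow> 'a \<Rightarrow> nat \<Rightarrow> nat \<Rightarrow> 'a" where
  "qsum_cert q Y N d = q ^ (N + 1 - 2 * d) * (1 - q ^ (2 * d)) * qsum_term q Y (Suc N) d"

context
  fixes q :: "'a::field"
  assumes not_root: "\<forall>j>0. q ^ j \<noteq> 1"
begin

lemma qsum_term_Suc_N:
  "(1 - q ^ (m + 1)) * qsum_term q Y (2 * d + m + 1) d
     = (1 - Y * q ^ (2 * (d + m))) * qsum_term q Y (2 * d + m) d"
proof -
  have "2 * d + m + 1 - d = Suc (d + m)" "2 * d + m - d = d + m" by simp_all
  then have "qpoch Y (q\<^sup>2) (2 * d + m + 1 - d) = qpoch Y (q\<^sup>2) (2 * d + m - d) * (1 - Y * q ^ (2 * (d + m)))"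
    by (simp only: qpoch_Suc power_mult)
  moreover have "nat (int m + 1) = m + 1" by simp
  then have "inv_qfact q (int m) = inv_qfact q (int m + 1) * (1 - q ^ (m + 1))"
    using inv_qfact_pred[OF not_root, of "int m + 1"] by (simp only: add_diff_cancel_right')
  moreover have "int (2 * d + m + 1) - 2 * int d = int m + 1" "int (2 * d + m) - 2 * int d = int m"
    by simp_all
  ultimately show ?thesis
    unfolding qsum_term_def by (simp only: mult_ac)
qed

lemma qsum_term_Suc_N_Suc_d:
  "(1 - q ^ (2 * d + 2)) * qsum_term q Y (2 * d + m + 1) (Suc d)
     = - (Y * q ^ (2 * d + 1) * (1 - q ^ m)) * qsum_term q Y (2 * d + m) d"
proof -
  have "inv_qfact (q\<^sup>2) (int d) = inv_qfact (q\<^sup>2) (int (Suc d)) * (1 - q ^ (2 * d + 2))"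
    using inv_qfact_pred[OF not_root_of_unity_power[OF not_root], of 2 "int (Suc d)"]
    by (simp only: nat_int power_mult[symmetric]) simp
  moreover have "inv_qfact q (int (2 * d + m + 1) - 2 * int (Suc d))
      = inv_qfact q (int (2 * d + m) - 2 * int d) * (1 - q ^ m)"
    using inv_qfact_pred[OF not_root, of "int m"] by simp
  moreover have "Suc d * Suc d = d * d + (2 * d + 1)" by simp
  then have "q ^ (Suc d * Suc d) = q ^ (d * d) * q ^ (2 * d + 1)"
    by (simp only: power_add)
  moreover have "2 * d + m + 1 - Suc d = 2 * d + m - d" by simp
  ultimately show ?thesis
    unfolding qsum_term_def by (simp only: power_Suc mult_ac) simp
qed

lemma qsum_term_telescoping:
  "(1 - q ^ (N + 1)) * qsum_term q Y (Suc N) d - (1 - Y * q ^ N) * qsum_term q Y N d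
     = qsum_cert q Y N d - qsum_cert q Y N (Suc d)"
proof (cases "2 * d \<le> N")
  case True
  then obtain m where N: "N = 2 * d + m" by (metis le_add_diff_inverse)
  define S0 where "S0 = qsum_term q Y (2 * d + m) d"
  define S1 where "S1 = qsum_term q Y (2 * d + m + 1) d"
  have "qsum_cert q Y N (Suc d)
      = q ^ (m - 1) * ((1 - q ^ (2 * d + 2)) * qsum_term q Y (2 * d + m + 1) (Suc d))"
    unfolding qsum_cert_def N by (simp add: mult.assoc)
  also have "\<dots> = - (Y * (q ^ (m - 1) * q ^ (2 * d + 1) * (1 - q ^ m))) * S0"
    unfolding qsum_term_Suc_N_Suc_d S0_def by (simp only: mult_ac mult_minus_left mult_minus_right)
  also have "q ^ (m - 1) * q ^ (2 * d + 1) * (1 - q ^ m) = q ^ (2 * d + m) * (1 - q ^ m)"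
    by (cases m) (simp_all add: power_add)
  finally have cert_Suc: "qsum_cert q Y N (Suc d) = - (Y * (q ^ (2 * d + m) * (1 - q ^ m))) * S0" .
  have cert: "qsum_cert q Y N d = q ^ (m + 1) * (1 - q ^ (2 * d)) * S1"
    unfolding qsum_cert_def N S1_def by simp
  have S1_S0: "(1 - q ^ (m + 1)) * S1 = (1 - Y * (q ^ (2 * d + m) * q ^ m)) * S0"
    unfolding S0_def S1_def qsum_term_Suc_N by (simp add: power_add[symmetric] algebra_simps)
  have "q ^ (N + 1) = q ^ (m + 1) * q ^ (2 * d)" "Suc N = 2 * d + m + 1"
    unfolding N by (simp_all add: power_add)
  then have "(1 - q ^ (N + 1)) * qsum_term q Y (Suc N) d - (1 - Y * q ^ N) * qsum_term q Y N d
      = (1 - q ^ (m + 1) * q ^ (2 * d)) * S1 - (1 - Y * q ^ (2 * d + m)) * S0"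
    by (simp only: N S0_def S1_def)
  also have "\<dots> = q ^ (m + 1) * (1 - q ^ (2 * d)) * S1 - - (Y * (q ^ (2 * d + m) * (1 - q ^ m))) * S0"
    using S1_S0 by (simp add: algebra_simps del: power_Suc)
  finally show ?thesis
    unfolding cert cert_Suc .
next
  case False
  then have "qsum_term q Y N d = 0" "qsum_cert q Y N (Suc d) = 0"
    unfolding qsum_cert_def by (simp_all add: qsum_term_eq_0)
  moreover have "(1 - q ^ (N + 1)) * qsum_term q Y (Suc N) d = qsum_cert q Y N d"
  proof (cases "N + 1 = 2 * d")
    case True
    then show ?thesis unfolding qsum_cert_def by simp
  next
    case False
    then have "qsum_term q Y (Suc N) d = 0" using \<open>\<not> 2 * d \<le> N\<close> by (simp add: qsum_term_eq_0)
    then show ?thesis unfolding qsum_cert_def by simp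
  qed
  ultimately show ?thesis by simp
qed

lemma sum_qsum_term:
  assumes "N < 2 * K"
  shows "(\<Sum>d<K. qsum_term q Y N d) = qpoch Y q N / qpoch q q N"
  using assms
proof (induction N)
  case 0
  have "qsum_term q Y 0 d = (if d = 0 then 1 else 0)" for d
    unfolding qsum_term_def inv_qfact_def by simp
  then show ?case using 0 by simp
next
  case (Suc N)
  have "(\<Sum>d<K. (1 - q ^ (N + 1)) * qsum_term q Y (Suc N) d - (1 - Y * q ^ N) * qsum_term q Y N d)
      = qsum_cert q Y N 0 - qsum_cert q Y N K"
    unfolding qsum_term_telescoping by (rule sum_lessThan_telescope')
  also have "\<dots> = 0"
    using Suc.prems unfolding qsum_cert_def by (simp add: qsum_term_eq_0)
  finally have "(1 - q ^ (N + 1)) * (\<Sum>d<K. qsum_term q Y (Suc N) d)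
      = (1 - Y * q ^ N) * (\<Sum>d<K. qsum_term q Y N d)"
    by (simp only: sum_subtractf sum_distrib_left[symmetric] right_minus_eq)
  moreover have "(\<Sum>d<K. qsum_term q Y N d) = qpoch Y q N / qpoch q q N"
    using Suc by simp
  moreover have "1 - q ^ (N + 1) \<noteq> 0"
    using not_root by (metis right_minus_eq zero_less_Suc Suc_eq_plus1)
  moreover have "qpoch q q N \<noteq> 0"
    using qpoch_power_nonzero[OF not_root, of 1] by simp
  ultimately show ?case
    by (simp add: qpoch_Suc field_simps)
qed

end

lemma qvar_power: "qvar ^ j = Fract ([:0, 1:] ^ j) 1"
  by (induction j) (simp_all add: qvar_def One_fract_def mult_fract)

lemma qvar_not_root_of_unity: "\<forall>j>0. qvar ^ j \<noteq> 1"
proof (intro allI impI notI)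
  fix j :: nat
  assume "0 < j" and "qvar ^ j = 1"
  then have "([:0, 1:] ^ j :: rat poly) = 1"
    by (simp add: qvar_power One_fract_def eq_fract)
  then have "degree ([:0, 1:] ^ j :: rat poly) = 0" by simp
  with \<open>0 < j\<close> show False by (simp only: degree_linear_power)
qed

lemma det_scale_rows_cols:
  assumes A: "A \<in> carrier_mat n n"
  shows "det (mat n n (\<lambda>(i, j). r i * A $$ (i, j) * c j))
    = (\<Prod>i<n. r i) * (\<Prod>j<n. c j) * det A"
proof -
  let ?M = "mat n n (\<lambda>(i, j). r i * A $$ (i, j) * c j)"
  have diag_prod: "(\<Prod>i = 0..<n. ?M $$ (i, p i))
      = (\<Prod>i<n. r i) * (\<Prod>j<n. c j) * (\<Prod>i = 0..<n. A $$ (i, p i))"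
    if p: "p permutes {0..<n}" for p
  proof -
    have "(\<Prod>i = 0..<n. ?M $$ (i, p i)) = (\<Prod>i = 0..<n. r i * A $$ (i, p i) * c (p i))"
      using permutes_in_image[OF p] by (intro prod.cong) auto
    moreover have "(\<Prod>i = 0..<n. c (p i)) = (\<Prod>j<n. c j)"
      using prod.reindex_bij_betw[OF permutes_imp_bij[OF p], of c] by (simp add: atLeast0LessThan)
    ultimately show ?thesis by (simp add: prod.distrib atLeast0LessThan)
  qed
  have "det ?M = (\<Sum>p \<in> {p. p permutes {0..<n}}. signof p * (\<Prod>i = 0..<n. ?M $$ (i, p i)))"
    by (rule det_def') simp
  also have "\<dots> = (\<Sum>p \<in> {p. p permutes {0..<n}}.
      (\<Prod>i<n. r i) * (\<Prod>j<n. c j) * (signof p * (\<Prod>i = 0..<n. A $$ (i, p i))))"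
    by (intro sum.cong refl) (simp only: mem_Collect_eq diag_prod mult.left_commute[of "signof _"])
  finally show ?thesis
    by (simp only: det_def'[OF A] sum_distrib_left)
qed

definition reduction_mat :: "nat \<Rightarrow> nat \<Rightarrow> rat poly fract mat" where
  "reduction_mat x n = mat n n (\<lambda>(i, l).
     if i \<le> l then qsum_coeff qvar (qvar ^ (2 * (i + 1) + 2 * x)) (l - i) else 0)"

lemma det_reduction_mat: "det (reduction_mat x n) = 1"
proof -
  have "upper_triangular (reduction_mat x n)"
    unfolding upper_triangular_def reduction_mat_def by simp
  then show ?thesis
    by (simp add: det_upper_triangular[of _ n] prod_list_diag_prod reduction_mat_def qsum_coeff_def)
qed

lemma sum_if_le_shift:
  fixes f :: "nat \<Rightarrow> 'a::comm_monoid_add"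
  shows "(\<Sum>l<n. if i \<le> l then f l else 0) = (\<Sum>d<n - i. f (i + d))"
proof -
  have "(\<Sum>l<n. if i \<le> l then f l else 0) = sum f {i..<n}"
    by (simp add: sum.inter_filter[symmetric] atLeastLessThan_def lessThan_def Collect_conj_eq
        Int_commute atLeast_def)
  also have "\<dots> = (\<Sum>d<n - i. f (i + d))"
    by (simp add: sum.atLeastLessThan_shift_0 atLeast0LessThan)
  finally show ?thesis .
qed

lemma reduction_mat_mult_mmat:
  assumes bounded: "\<forall>j < length a. a ! j \<le> 2 * int (length a)"
  shows "reduction_mat x (length a) * mmat a x = mat (length a) (length a) (\<lambda>(i, j).
    smat a $$ (i, j) * qpoch (qvar ^ (2 * (i + 1) + 2 * x)) qvar (nat (a ! j + 1 - 2 * int (i + 1))))"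
    (is "_ = ?R")
proof (rule eq_matI)
  fix i j assume "i < dim_row ?R" "j < dim_col ?R"
  then have i: "i < length a" and j: "j < length a" by simp_all
  define Y where "Y = qvar ^ (2 * (i + 1) + 2 * x)"
  define e where "e = a ! j + 1 - 2 * int (i + 1)"
  have "dim_row (mmat a x) = length a" "dim_col (mmat a x) = length a"
    by (simp_all add: mmat_def)
  then have "(reduction_mat x (length a) * mmat a x) $$ (i, j)
      = (\<Sum>l < length a. if i \<le> l then qsum_coeff qvar Y (l - i) * mmat a x $$ (l, j) else 0)"
    using i j by (auto simp: reduction_mat_def scalar_prod_def atLeast0LessThan Y_def intro!: sum.cong)
  also have "\<dots> = (\<Sum>d < length a - i. qsum_coeff qvar Y d * mmat a x $$ (i + d, j))"
    by (simp add: sum_if_le_shift)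
  finally have entry_sum: "(reduction_mat x (length a) * mmat a x) $$ (i, j)
      = (\<Sum>d < length a - i. qsum_coeff qvar Y d * mmat a x $$ (i + d, j))" .
  have mmat_entry: "mmat a x $$ (i + d, j) = (if e < 2 * int d then 0
      else qpoch (qvar ^ (2 * (i + d + 1) + 2 * x)) (qvar\<^sup>2) (nat (e - 2 * int d))
        / qpoch qvar qvar (nat (e - 2 * int d)))" if "d < length a - i" for d
    using that j by (simp add: mmat_def e_def Let_def algebra_simps)
  have smat_entry: "smat a $$ (i, j) = (if e < 0 then 0 else 1 / qpoch qvar qvar (nat e))"
    using i j by (simp add: smat_def e_def Let_def)
  show "(reduction_mat x (length a) * mmat a x) $$ (i, j) = ?R $$ (i, j)"
  proof (cases "e < 0")
    case True
    then have "\<forall>d \<in> {..<length a - i}. qsum_coeff qvar Y d * mmat a x $$ (i + d, j) = 0"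
      by (simp add: mmat_entry)
    then have "(reduction_mat x (length a) * mmat a x) $$ (i, j) = 0"
      unfolding entry_sum by (rule sum.neutral)
    then show ?thesis
      using i j True by (simp add: smat_entry e_def[symmetric])
  next
    case False
    define N where "N = nat e"
    have e: "e = int N" using False unfolding N_def by simp
    have "int N < 2 * (int (length a) - int i)"
      using bounded j e unfolding e_def by auto
    then have "int N < int (2 * (length a - i))" using i by simp
    then have "N < 2 * (length a - i)" by (simp only: of_nat_less_iff)
    moreover have "qsum_coeff qvar Y d * mmat a x $$ (i + d, j) = qsum_term qvar Y N d"
      if "d < length a - i" for d
    proof (cases "N < 2 * d")
      case True
      then show ?thesis unfolding mmat_entry[OF that] e by (simp add: qsum_term_eq_0)
    next
      case False
      have "qvar ^ (2 * (i + d + 1) + 2 * x) = Y * (qvar\<^sup>2) ^ d"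
        unfolding Y_def by (simp add: power_add[symmetric] power_mult[symmetric] algebra_simps)
      moreover have "nat (int N - 2 * int d) = N - 2 * d" using False by simp
      ultimately show ?thesis
        using False unfolding mmat_entry[OF that] e by (simp add: qsum_term_eq_coeff_mult)
    qed
    ultimately have "(reduction_mat x (length a) * mmat a x) $$ (i, j) = qpoch Y qvar N / qpoch qvar qvar N"
      unfolding entry_sum by (simp add: sum_qsum_term[OF qvar_not_root_of_unity])
    moreover have "?R $$ (i, j) = smat a $$ (i, j) * qpoch Y qvar (nat e)"
      using i j unfolding Y_def e_def by simp
    ultimately show ?thesis
      by (simp add: smat_entry e)
  qed
qed (simp_all add: reduction_mat_def mmat_def)

lemma admissible_bounds:
  assumes "admissible a" and "j < length a"
  shows "2 * int j + 1 \<le> a ! j" and "a ! j \<le> 2 * int (length a)"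
  using assms unfolding admissible_def by (fastforce dest: bspec[of _ _ "Suc j"])+

lemma qpoch_qvar_shift:
  "qpoch (qvar ^ (2 * (i + 1) + 2 * x)) qvar k
    = qpoch (qvar ^ (2 * x + 1)) qvar (2 * i + 1 + k) / qpoch (qvar ^ (2 * x + 1)) qvar (2 * i + 1)"
proof -
  have "2 * x + 1 + (2 * i + 1) = 2 * (i + 1) + 2 * x" by simp
  then have "qvar ^ (2 * x + 1) * qvar ^ (2 * i + 1) = qvar ^ (2 * (i + 1) + 2 * x)"
    by (simp only: power_add[symmetric])
  moreover have "qpoch (qvar ^ (2 * x + 1)) qvar (2 * i + 1) \<noteq> 0"
    by (rule qpoch_power_nonzero[OF qvar_not_root_of_unity]) simp
  ultimately show ?thesis
    using qpoch_shift_eq_div by metis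
qed

lemma reduction_mat_mult_mmat_scaled:
  fixes a :: "int list" and x :: nat
  assumes "admissible a"
  defines "g m \<equiv> qpoch (qvar ^ (2 * x + 1)) qvar m"
  shows "reduction_mat x (length a) * mmat a x = mat (length a) (length a)
    (\<lambda>(i, j). inverse (g (2 * i + 1)) * smat a $$ (i, j) * g (nat (a ! j)))"
proof -
  have "smat a $$ (i, j) * qpoch (qvar ^ (2 * (i + 1) + 2 * x)) qvar (nat (a ! j + 1 - 2 * int (i + 1)))
      = inverse (g (2 * i + 1)) * smat a $$ (i, j) * g (nat (a ! j))"
    if "i < length a" "j < length a" for i j
  proof (cases "a ! j + 1 - 2 * int (i + 1) < 0")
    case True
    then show ?thesis using that by (simp add: smat_def)
  next
    case False
    define k where "k = nat (a ! j + 1 - 2 * int (i + 1))"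
    have "nat (a ! j) = 2 * i + 1 + k" using False unfolding k_def by simp
    then show ?thesis
      unfolding k_def[symmetric] qpoch_qvar_shift g_def by (simp add: divide_inverse)
  qed
  then show ?thesis
    using reduction_mat_mult_mmat[of a x] admissible_bounds(2)[OF assms(1)]
    by (auto intro!: eq_matI)
qed

lemma prod_qpoch_admissible:
  fixes a :: "int list" and x :: nat
  assumes "admissible a"
  defines "g m \<equiv> qpoch (qvar ^ (2 * x + 1)) qvar m"
  shows "(\<Prod>k\<in>{1..length a}. qpoch (qvar ^ (2 * x + 2 * k)) qvar (nat (a ! (k - 1) - 2 * int k + 1)))
    = (\<Prod>i<length a. inverse (g (2 * i + 1))) * (\<Prod>j<length a. g (nat (a ! j)))"
proof -
  have "qpoch (qvar ^ (2 * x + 2 * Suc i)) qvar (nat (a ! (Suc i - 1) - 2 * int (Suc i) + 1))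
      = inverse (g (2 * i + 1)) * g (nat (a ! i))" if "i < length a" for i
  proof -
    define k where "k = nat (a ! i - 2 * int (Suc i) + 1)"
    have "nat (a ! i) = 2 * i + 1 + k"
      using admissible_bounds(1)[OF assms(1) that] unfolding k_def by (simp add: nat_eq_iff)
    moreover have "qpoch (qvar ^ (2 * x + 2 * Suc i)) qvar (nat (a ! (Suc i - 1) - 2 * int (Suc i) + 1))
        = qpoch (qvar ^ (2 * (i + 1) + 2 * x)) qvar k"
      unfolding k_def by (simp add: add.commute)
    ultimately show ?thesis
      unfolding qpoch_qvar_shift g_def by (simp add: divide_inverse)
  qed
  then show ?thesis
    by (simp add: prod.atLeast1_atMost_eq prod.distrib)
qed

theorem theorem1:
  fixes a :: "int list" and x :: nat
  assumes "length a \<ge> 1" and "admissible a"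
  shows "det (mmat a x) =
    (\<Prod>k\<in>{1..length a}. qpoch (qvar ^ (2 * x + 2 * k)) qvar (nat (a ! (k - 1) - 2 * int k + 1)))
      * det (smat a)"
proof -
  define n where "n = length a"
  define g where "g m = qpoch (qvar ^ (2 * x + 1)) qvar m" for m
  have carrier: "reduction_mat x n \<in> carrier_mat n n" "mmat a x \<in> carrier_mat n n"
    "smat a \<in> carrier_mat n n"
    by (simp_all add: reduction_mat_def mmat_def smat_def n_def)
  have "det (mmat a x) = det (reduction_mat x n * mmat a x)"
    using det_mult[OF carrier(1,2)] by (simp add: det_reduction_mat)
  also have "\<dots> = det (mat n n (\<lambda>(i, j). inverse (g (2 * i + 1)) * smat a $$ (i, j) * g (nat (a ! j))))"
    using reduction_mat_mult_mmat_scaled[OF assms(2), of x] unfolding n_def g_def by simp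
  also have "\<dots> = (\<Prod>i<n. inverse (g (2 * i + 1))) * (\<Prod>j<n. g (nat (a ! j))) * det (smat a)"
    by (rule det_scale_rows_cols[OF carrier(3)])
  finally show ?thesis
    using prod_qpoch_admissible[OF assms(2), of x] unfolding n_def g_def by simp
qed

end
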